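(* If $\mathcal{F}$ is a finitary argumentation framework, then there exists a $\mathit{cf1.5}$ extension of $\mathcal{F}$, i.e., $\mathit{cf1.5}(\mathcal{F})\neq\emptyset$.
   Context: An argumentation framework (AF) is $\mathcal{F}=(A_{\mathcal{F}},R_{\mathcal{F}})$ with $R_{\mathcal{F}}\subseteq A_{\mathcal{F}}\times A_{\mathcal{F}}$ (possibly infinite); $a\rightarrow b$ means $(a,b)\in R_{\mathcal{F}}$. $\mathcal{F}$ is finitary if each argument is attacked by only finitely many arguments. $\mathcal{F}|_S=(A_{\mathcal{F}}\cap S,R_{\mathcal{F}}\cap(S\times S))$. $S$ is conflict-free if no $a,b\in S$ have $a\rightarrow b$; a naive extension is a $\subseteq$-maximal conflict-free set. $\mathrm{SCC}(\mathcal{F})$ is the set of strongly connected components of the attack graph (where $b$ is in the component of $a$ iff there are directed attack paths, possibly of length 0, from $a$ to $b$ and from $b$ to $a$). For $X,S\subseteq A_{\mathcal{F}}$, $D_S(X)=\{b\in X:\exists a\in S\setminus X,\ a\rightarrow b\}$. $S\in\mathit{cf1.5}(\mathcal{F})$ iff $S$ is conflict-free and for each $X\in\mathrm{SCC}(\mathcal{F})$, $S\cap X$ is a naive extension of $\mathcal{F}|_{X\setminus D_S(X)}$. *)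

theory Defs
  imports Main
begin

text \<open>An argumentation framework: a set of arguments A and an attack relation R
  with R a subset of A x A. (a,b) in R means a attacks b.\<close>

definition AF :: "'a set \<Rightarrow> ('a \<times> 'a) set \<Rightarrow> bool" where
  "AF A R \<longleftrightarrow> R \<subseteq> A \<times> A"

definition finitary :: "'a set \<Rightarrow> ('a \<times> 'a) set \<Rightarrow> bool" where
  "finitary A R \<longleftrightarrow> (\<forall>b\<in>A. finite {a\<in>A. (a, b) \<in> R})"

definition restrict_args :: "'a set \<Rightarrow> 'a set \<Rightarrow> 'a set" where
  "restrict_args A S = A \<inter> S"

definition restrict_att :: "('a \<times> 'a) set \<Rightarrow> 'a set \<Rightarrow> ('a \<times> 'a) set" where
  "restrict_att R S = R \<inter> (S \<times> S)"

definition conflict_free :: "'a set \<Rightarrow> ('a \<times> 'a) set \<Rightarrow> 'a set \<Rightarrow> bool" where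
  "conflict_free A R S \<longleftrightarrow> S \<subseteq> A \<and> (\<forall>a\<in>S. \<forall>b\<in>S. (a, b) \<notin> R)"

definition naive :: "'a set \<Rightarrow> ('a \<times> 'a) set \<Rightarrow> 'a set \<Rightarrow> bool" where
  "naive A R S \<longleftrightarrow> conflict_free A R S \<and>
     (\<forall>T. conflict_free A R T \<longrightarrow> S \<subseteq> T \<longrightarrow> T = S)"

definition scc_of :: "'a set \<Rightarrow> ('a \<times> 'a) set \<Rightarrow> 'a \<Rightarrow> 'a set" where
  "scc_of A R a = {b\<in>A. (a, b) \<in> R\<^sup>* \<and> (b, a) \<in> R\<^sup>*}"

definition SCCs :: "'a set \<Rightarrow> ('a \<times> 'a) set \<Rightarrow> 'a set set" where
  "SCCs A R = scc_of A R ` A"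

definition D :: "('a \<times> 'a) set \<Rightarrow> 'a set \<Rightarrow> 'a set \<Rightarrow> 'a set" where
  "D R S X = {b\<in>X. \<exists>a\<in>S - X. (a, b) \<in> R}"

definition cf15 :: "'a set \<Rightarrow> ('a \<times> 'a) set \<Rightarrow> 'a set \<Rightarrow> bool" where
  "cf15 A R S \<longleftrightarrow> conflict_free A R S \<and>
     (\<forall>X\<in>SCCs A R. naive (restrict_args A (X - D R S X)) (restrict_att R (X - D R S X)) (S \<inter> X))"

end

theory Submission
  imports Defs "HOL-Analysis.Function_Topology" "HOL-Library.Countable_Set"
begin

(* Call a conflict-free set S blocking if every argument outside S attacks itself, is attacked
   by S, or attacks a member of S in its own SCC; every blocking set is a cf1.5 extension.
   In a finitary framework every SCC is countable, so it can be enumerated, and it suffices to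
   demand the third alternative only towards members of smaller index.  Being blocking then
   becomes a set of finite propositional clauses over the arguments.  Every finite subset of
   these clauses is satisfiable: on a finite set of arguments, remove one lying in a terminal
   strongly connected class with maximal index, solve the rest, and add it back unless it is
   already blocked.  Compactness of propositional logic (Tychonoff for 2^A) gives a global
   solution. *)

lemma clause_compactness:
  fixes \<Phi> :: "('a \<times> bool) set set"
  assumes finite_clauses: "\<And>C. C \<in> \<Phi> \<Longrightarrow> finite C"
    and finitely_sat: "\<And>\<Psi>. \<Psi> \<subseteq> \<Phi> \<Longrightarrow> finite \<Psi> \<Longrightarrow> \<exists>f. \<forall>C\<in>\<Psi>. \<exists>(v, b)\<in>C. f v = b"
  shows "\<exists>f. \<forall>C\<in>\<Phi>. \<exists>(v, b)\<in>C. f v = b"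
proof -
  define X where "X = product_topology (\<lambda>_::'a. discrete_topology (UNIV::bool set)) UNIV"
  have "compact_space X"
    unfolding X_def by (simp add: compact_space_product_topology compact_space_discrete_topology)
  have literal_closed: "closedin X {f. f v = b}" for v b
  proof -
    have "continuous_map X (discrete_topology UNIV) (\<lambda>f. f v)"
      unfolding X_def by (rule continuous_map_product_projection) simp
    then have "closedin X {f \<in> topspace X. f v \<in> {b}}"
      by (rule closedin_continuous_map_preimage) simp
    then show ?thesis
      by (simp add: X_def PiE_UNIV_domain)
  qed
  define models :: "('a \<times> bool) set \<Rightarrow> ('a \<Rightarrow> bool) set"
    where "models C = {f. \<exists>(v, b)\<in>C. f v = b}" for C
  have "closedin X (models C)" if "C \<in> \<Phi>" for C
  proof -
    have "models C = (\<Union>(v, b)\<in>C. {f. f v = b})"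
      unfolding models_def by auto
    moreover have "closedin X (\<Union>(v, b)\<in>C. {f. f v = b})"
      using finite_clauses that by (intro closedin_Union) (auto simp: literal_closed)
    ultimately show ?thesis
      by simp
  qed
  moreover have "\<Inter> \<F> \<noteq> {}" if "finite \<F>" and "\<F> \<subseteq> models ` \<Phi>" for \<F>
  proof -
    obtain \<Psi> where \<Psi>: "\<Psi> \<subseteq> \<Phi>" "finite \<Psi>" "\<F> = models ` \<Psi>"
      by (meson \<open>finite \<F>\<close> \<open>\<F> \<subseteq> models ` \<Phi>\<close> finite_subset_image)
    obtain f where "\<forall>C\<in>\<Psi>. \<exists>(v, b)\<in>C. f v = b"
      using finitely_sat[OF \<Psi>(1,2)] by blast
    then have "f \<in> \<Inter> \<F>"
      unfolding \<Psi>(3) models_def by blast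
    then show ?thesis
      by blast
  qed
  ultimately have "\<Inter> (models ` \<Phi>) \<noteq> {}"
    using \<open>compact_space X\<close>[unfolded compact_space_fip, rule_format, of "models ` \<Phi>"] by blast
  then show ?thesis
    unfolding models_def by auto
qed

lemma finite_has_terminal_element:
  fixes r :: "('a \<times> 'a) set" and h :: "'a \<Rightarrow> 'b::linorder"
  assumes "finite G" and "G \<noteq> {}"
  obtains m where "m \<in> G" and "\<And>y. y \<in> G \<Longrightarrow> (m, y) \<in> r\<^sup>* \<Longrightarrow> (y, m) \<in> r\<^sup>* \<and> h y \<le> h m"
proof -
  define reach where "reach x = {y \<in> G. (x, y) \<in> r\<^sup>*}" for x
  obtain m0 where "m0 \<in> G" and m0_least: "\<And>y. y \<in> G \<Longrightarrow> card (reach m0) \<le> card (reach y)"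
    using ex_has_least_nat[of "\<lambda>y. y \<in> G" _ "\<lambda>y. card (reach y)"] \<open>G \<noteq> {}\<close> by blast
  have m0_terminal: "(y, m0) \<in> r\<^sup>*" if "y \<in> G" and "(m0, y) \<in> r\<^sup>*" for y
  proof (rule ccontr)
    assume "(y, m0) \<notin> r\<^sup>*"
    then have "reach y \<subset> reach m0"
      using that \<open>m0 \<in> G\<close> unfolding reach_def by (auto intro: rtrancl_trans)
    then have "card (reach y) < card (reach m0)"
      using \<open>finite G\<close> unfolding reach_def by (simp add: psubset_card_mono)
    then show False
      using m0_least[OF \<open>y \<in> G\<close>] by simp
  qed
  define M where "M = {y \<in> G. (m0, y) \<in> r\<^sup>* \<and> (y, m0) \<in> r\<^sup>*}"
  have "finite M" and "m0 \<in> M"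
    using \<open>finite G\<close> \<open>m0 \<in> G\<close> unfolding M_def by auto
  then obtain m where "m \<in> M" and m_max: "h m = Max (h ` M)"
    using Max_in[of "h ` M"] by (metis empty_iff finite_imageI image_iff image_is_empty)
  show ?thesis
  proof
    show "m \<in> G"
      using \<open>m \<in> M\<close> unfolding M_def by blast
    fix y assume "y \<in> G" and "(m, y) \<in> r\<^sup>*"
    then have "y \<in> M"
      using \<open>m \<in> M\<close> m0_terminal unfolding M_def by (blast intro: rtrancl_trans)
    then show "(y, m) \<in> r\<^sup>* \<and> h y \<le> h m"
      using \<open>m \<in> M\<close> \<open>finite M\<close> m_max unfolding M_def by (auto intro: rtrancl_trans)
  qed
qed

definition blocked :: "('a \<times> 'a) set \<Rightarrow> 'a set \<Rightarrow> 'a set \<Rightarrow> 'a \<Rightarrow> bool" where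
  "blocked R S N a \<longleftrightarrow> (a, a) \<in> R \<or> (\<exists>c\<in>S. (c, a) \<in> R) \<or> (\<exists>b\<in>S \<inter> N. (a, b) \<in> R)"

lemma blocked_mono: "blocked R S N a \<Longrightarrow> S \<subseteq> S' \<Longrightarrow> blocked R S' N a"
  unfolding blocked_def by blast

lemma finite_ex_conflict_free_blocking:
  fixes h :: "'a \<Rightarrow> 'b::linorder"
  assumes "finite G"
    and h_inj: "\<And>x y. x \<in> G \<Longrightarrow> y \<in> G \<Longrightarrow> (x, y) \<in> R\<^sup>* \<Longrightarrow> (y, x) \<in> R\<^sup>* \<Longrightarrow> h x = h y \<Longrightarrow> x = y"
  shows "\<exists>S. conflict_free G R S \<and> (\<forall>a\<in>G - S. blocked R S {b. (b, a) \<in> R\<^sup>* \<and> h b < h a} a)"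
  using \<open>finite G\<close>
proof (induction G rule: finite_remove_induct)
  case empty
  show ?case
    unfolding conflict_free_def by blast
next
  case (remove H)
  let ?N = "\<lambda>a. {b. (b, a) \<in> R\<^sup>* \<and> h b < h a}"
  obtain m where "m \<in> H" and m_terminal: "\<And>y. y \<in> H \<Longrightarrow> (m, y) \<in> R\<^sup>* \<Longrightarrow> (y, m) \<in> R\<^sup>* \<and> h y \<le> h m"
    using finite_has_terminal_element[OF remove.hyps(1,2)] by blast
  obtain S where S_cf: "conflict_free (H - {m}) R S" and S_blocks: "\<forall>a\<in>H - {m} - S. blocked R S (?N a) a"
    using remove.IH[OF \<open>m \<in> H\<close>] by blast
  show ?case
  proof (cases "blocked R S (?N m) m")
    case True
    have "conflict_free H R S"
      using S_cf unfolding conflict_free_def by blast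
    moreover have "\<forall>a\<in>H - S. blocked R S (?N a) a"
      using S_blocks True by blast
    ultimately show ?thesis
      by blast
  next
    case False
    \<comment> \<open>m is terminal, so anything in S it attacks lies in its class with smaller h\<close>
    have "(m, x) \<notin> R" if "x \<in> S" for x
    proof
      assume "(m, x) \<in> R"
      have "x \<in> H" "x \<noteq> m"
        using S_cf \<open>x \<in> S\<close> unfolding conflict_free_def by auto
      with \<open>(m, x) \<in> R\<close> have "(x, m) \<in> R\<^sup>*" and "h x \<le> h m"
        using m_terminal by auto
      moreover have "h x \<noteq> h m"
        using h_inj \<open>x \<in> H\<close> \<open>m \<in> H\<close> remove.hyps(3) \<open>(m, x) \<in> R\<close> \<open>(x, m) \<in> R\<^sup>*\<close> \<open>x \<noteq> m\<close> by blast
      ultimately have "x \<in> ?N m"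
        by simp
      then show False
        using False \<open>(m, x) \<in> R\<close> \<open>x \<in> S\<close> unfolding blocked_def by blast
    qed
    with False S_cf \<open>m \<in> H\<close> have "conflict_free H R (insert m S)"
      unfolding blocked_def conflict_free_def by auto
    moreover have "blocked R (insert m S) (?N a) a" if "a \<in> H - insert m S" for a
      using S_blocks that by (blast intro: blocked_mono)
    ultimately show ?thesis
      by blast
  qed
qed

lemma scc_of_subset: "scc_of A R a \<subseteq> A"
  unfolding scc_of_def by blast

lemma scc_of_eq: "b \<in> scc_of A R a \<Longrightarrow> scc_of A R b = scc_of A R a"
  unfolding scc_of_def by (auto intro: rtrancl_trans)

lemma cf15_if_blocked:
  assumes "conflict_free A R S" and blocked: "\<forall>a\<in>A - S. blocked R S (scc_of A R a) a"
  shows "cf15 A R S"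
  unfolding cf15_def
proof (intro conjI ballI)
  show "conflict_free A R S" by fact
  fix X assume "X \<in> SCCs A R"
  then obtain x where X: "X = scc_of A R x"
    unfolding SCCs_def by blast
  define Y where "Y = X - D R S X"
  have "X \<subseteq> A"
    using scc_of_subset X by simp
  then have "restrict_args A Y = Y"
    unfolding restrict_args_def Y_def by blast
  have S_cf: "(a, b) \<notin> R" if "a \<in> S" "b \<in> S" for a b
    using \<open>conflict_free A R S\<close> that unfolding conflict_free_def by blast
  have "S \<inter> X \<subseteq> Y"
    unfolding Y_def D_def using S_cf by blast
  then have "conflict_free Y (restrict_att R Y) (S \<inter> X)"
    unfolding conflict_free_def restrict_att_def using S_cf by blast
  moreover have "T \<subseteq> S \<inter> X" if T_cf: "conflict_free Y (restrict_att R Y) T" and "S \<inter> X \<subseteq> T" for T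
  proof
    fix a assume "a \<in> T"
    have T_cf': "(u, v) \<notin> R" if "u \<in> T" "v \<in> T" for u v
      using T_cf that unfolding conflict_free_def restrict_att_def by blast
    have "a \<in> Y"
      using T_cf \<open>a \<in> T\<close> unfolding conflict_free_def by blast
    then have "a \<in> X" "a \<in> A"
      using \<open>X \<subseteq> A\<close> unfolding Y_def by auto
    then have "scc_of A R a = X"
      using scc_of_eq X by simp
    show "a \<in> S \<inter> X"
    proof (rule ccontr)
      assume "a \<notin> S \<inter> X"
      with \<open>a \<in> X\<close> \<open>a \<in> A\<close> have "blocked R S X a"
        using blocked \<open>scc_of A R a = X\<close> by auto
      moreover have "c \<in> X" if "c \<in> S" "(c, a) \<in> R" for c
        using that \<open>a \<in> Y\<close> unfolding Y_def D_def by blast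
      ultimately show False
        unfolding blocked_def using T_cf' \<open>a \<in> T\<close> \<open>S \<inter> X \<subseteq> T\<close> by blast
    qed
  qed
  ultimately show "naive (restrict_args A Y) (restrict_att R Y) (S \<inter> X)"
    unfolding naive_def \<open>restrict_args A Y = Y\<close> by blast
qed

lemma finitary_finite_attackers:
  assumes "AF A R" and "finitary A R"
  shows "finite {c. (c, a) \<in> R}"
proof -
  have "{c. (c, a) \<in> R} = (if a \<in> A then {c \<in> A. (c, a) \<in> R} else {})"
    using \<open>AF A R\<close> unfolding AF_def by auto
  then show ?thesis
    using \<open>finitary A R\<close> unfolding finitary_def by simp
qed

lemma finitary_countable_ancestors:
  assumes "AF A R" and "finitary A R"
  shows "countable {b. (b, a) \<in> R\<^sup>*}"
proof -
  have "finite {b. (b, a) \<in> R ^^ n}" for n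
  proof (induction n)
    case (Suc n)
    have "{b. (b, a) \<in> R ^^ Suc n} \<subseteq> (\<Union>c\<in>{b. (b, a) \<in> R ^^ n}. {b. (b, c) \<in> R})"
      by (blast dest: relpow_Suc_D2)
    then show ?case
      using Suc finitary_finite_attackers[OF assms] by (blast intro: finite_subset)
  qed simp
  moreover have "{b. (b, a) \<in> R\<^sup>*} = (\<Union>n. {b. (b, a) \<in> R ^^ n})"
    by (auto simp: rtrancl_power)
  ultimately show ?thesis
    by (simp add: countable_finite)
qed

lemma finitary_countable_scc_of:
  assumes "AF A R" and "finitary A R"
  shows "countable (scc_of A R a)"
  by (rule countable_subset[OF _ finitary_countable_ancestors[OF assms]])
    (auto simp: scc_of_def)

(* Indices are only comparable between members of the same SCC. *)
definition scc_index :: "'a set \<Rightarrow> ('a \<times> 'a) set \<Rightarrow> 'a \<Rightarrow> nat" where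
  "scc_index A R a = to_nat_on (scc_of A R a) a"

lemma scc_index_inj:
  assumes "AF A R" and "finitary A R" and "x \<in> A" and "y \<in> A"
    and "(x, y) \<in> R\<^sup>*" and "(y, x) \<in> R\<^sup>*" and "scc_index A R x = scc_index A R y"
  shows "x = y"
proof -
  have "y \<in> scc_of A R x" "x \<in> scc_of A R x"
    using assms(3-6) unfolding scc_of_def by auto
  moreover from this have "scc_index A R y = to_nat_on (scc_of A R x) y"
    unfolding scc_index_def using scc_of_eq by metis
  ultimately show ?thesis
    using inj_on_to_nat_on[OF finitary_countable_scc_of[OF assms(1,2)]] assms(7)
    unfolding scc_index_def inj_on_def by metis
qed

lemma finite_scc_index_less:
  assumes "AF A R" and "finitary A R"
  shows "finite {b \<in> scc_of A R a. scc_index A R b < scc_index A R a}"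
proof (rule inj_on_finite[where B = "{..<scc_index A R a}"])
  show "inj_on (scc_index A R) {b \<in> scc_of A R a. scc_index A R b < scc_index A R a}"
    using scc_index_inj[OF assms] unfolding inj_on_def scc_of_def by (blast intro: rtrancl_trans)
qed auto

(* An assignment f stands for the set {a. f a}, and the literal (v, b) for f v = b.  The
   third alternative of blocked is only asked for towards arguments of smaller index, which
   keeps each blocking clause finite. *)
definition blocking_clause :: "'a set \<Rightarrow> ('a \<times> 'a) set \<Rightarrow> 'a \<Rightarrow> ('a \<times> bool) set" where
  "blocking_clause A R a = (\<lambda>v. (v, True)) `
     (insert a {c. (c, a) \<in> R} \<union> {b. (a, b) \<in> R \<and> (b, a) \<in> R\<^sup>* \<and> scc_index A R b < scc_index A R a})"

definition cf15_clauses :: "'a set \<Rightarrow> ('a \<times> 'a) set \<Rightarrow> ('a \<times> bool) set set" where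
  "cf15_clauses A R = {{(x, False), (y, False)} | x y. (x, y) \<in> R}
     \<union> blocking_clause A R ` {a \<in> A. (a, a) \<notin> R}"

lemma finite_cf15_clauses:
  assumes "AF A R" and "finitary A R" and "C \<in> cf15_clauses A R"
  shows "finite C"
proof -
  have "{b. (a, b) \<in> R \<and> (b, a) \<in> R\<^sup>* \<and> scc_index A R b < scc_index A R a}
      \<subseteq> {b \<in> scc_of A R a. scc_index A R b < scc_index A R a}" for a
    using \<open>AF A R\<close> unfolding AF_def scc_of_def by blast
  then have "finite (blocking_clause A R a)" for a
    unfolding blocking_clause_def
    using finitary_finite_attackers[OF assms(1,2)] finite_scc_index_less[OF assms(1,2)]
    by (meson finite_Un finite_imageI finite_insert finite_subset)
  then show ?thesis
    using \<open>C \<in> cf15_clauses A R\<close> unfolding cf15_clauses_def by auto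
qed

lemma cf15_clauses_finitely_satisfiable:
  assumes "AF A R" and "finitary A R" and "\<Psi> \<subseteq> cf15_clauses A R" and "finite \<Psi>"
  shows "\<exists>f. \<forall>C\<in>\<Psi>. \<exists>(v, b)\<in>C. f v = b"
proof -
  define G where "G = {a \<in> A. (a, a) \<notin> R \<and> blocking_clause A R a \<in> \<Psi>}"
  have "G \<subseteq> fst ` \<Union> \<Psi>"
    unfolding G_def blocking_clause_def by force
  moreover have "finite (\<Union> \<Psi>)"
    using assms finite_cf15_clauses by blast
  ultimately have "finite G"
    by (meson finite_imageI finite_subset)
  have "G \<subseteq> A"
    unfolding G_def by blast
  have "\<exists>S. conflict_free G R S
      \<and> (\<forall>a\<in>G - S. blocked R S {b. (b, a) \<in> R\<^sup>* \<and> scc_index A R b < scc_index A R a} a)"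
    using \<open>finite G\<close>
  proof (rule finite_ex_conflict_free_blocking)
    show "x = y" if "x \<in> G" "y \<in> G" "(x, y) \<in> R\<^sup>*" "(y, x) \<in> R\<^sup>*"
      and "scc_index A R x = scc_index A R y" for x y
      using that \<open>G \<subseteq> A\<close> by (intro scc_index_inj[OF assms(1,2)]) auto
  qed
  then obtain S where S_cf: "conflict_free G R S"
    and S_blocks: "\<forall>a\<in>G - S. blocked R S {b. (b, a) \<in> R\<^sup>* \<and> scc_index A R b < scc_index A R a} a"
    by blast
  have "\<exists>(v, b)\<in>C. (v \<in> S) = b" if "C \<in> \<Psi>" for C
  proof -
    consider x y where "C = {(x, False), (y, False)}" "(x, y) \<in> R"
      | a where "a \<in> G" "C = blocking_clause A R a"
      using \<open>C \<in> \<Psi>\<close> \<open>\<Psi> \<subseteq> cf15_clauses A R\<close> unfolding cf15_clauses_def G_def by blast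
    then show ?thesis
    proof cases
      case 1
      then show ?thesis
        using S_cf unfolding conflict_free_def by blast
    next
      case 2
      then have "a \<in> S \<or> blocked R S {b. (b, a) \<in> R\<^sup>* \<and> scc_index A R b < scc_index A R a} a"
        using S_blocks by blast
      then show ?thesis
        using \<open>a \<in> G\<close> unfolding \<open>C = blocking_clause A R a\<close> blocking_clause_def blocked_def G_def
        by auto
    qed
  qed
  then show ?thesis
    by (intro exI[of _ "\<lambda>v. v \<in> S"]) simp
qed

lemma cf15_of_model:
  assumes "AF A R" and model: "\<forall>C\<in>cf15_clauses A R. \<exists>(v, b)\<in>C. f v = b"
  shows "cf15 A R {a \<in> A. f a}"
proof (rule cf15_if_blocked)
  have "\<not> (f x \<and> f y)" if "(x, y) \<in> R" for x y
  proof -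
    have "{(x, False), (y, False)} \<in> cf15_clauses A R"
      unfolding cf15_clauses_def using that by blast
    then show ?thesis
      using model by auto
  qed
  then show "conflict_free A R {a \<in> A. f a}"
    unfolding conflict_free_def by blast
  show "\<forall>a\<in>A - {a \<in> A. f a}. blocked R {a \<in> A. f a} (scc_of A R a) a"
  proof
    fix a assume a: "a \<in> A - {a \<in> A. f a}"
    show "blocked R {a \<in> A. f a} (scc_of A R a) a"
    proof (cases "(a, a) \<in> R")
      case False
      then have "blocking_clause A R a \<in> cf15_clauses A R"
        using a unfolding cf15_clauses_def by blast
      then have "f a \<or> (\<exists>c. (c, a) \<in> R \<and> f c)
          \<or> (\<exists>b. (a, b) \<in> R \<and> (b, a) \<in> R\<^sup>* \<and> f b)"
        using model unfolding blocking_clause_def by fastforce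
      then show ?thesis
        using a \<open>AF A R\<close> unfolding blocked_def AF_def scc_of_def by blast
    qed (simp add: blocked_def)
  qed
qed

theorem theorem4:
  fixes A :: "'a set" and R :: "('a \<times> 'a) set"
  assumes "AF A R" and "finitary A R"
  shows "\<exists>S. cf15 A R S"
proof -
  have "\<exists>f. \<forall>C\<in>cf15_clauses A R. \<exists>(v, b)\<in>C. f v = b"
  proof (rule clause_compactness)
    show "finite C" if "C \<in> cf15_clauses A R" for C
      using finite_cf15_clauses[OF assms that] .
    show "\<exists>f. \<forall>C\<in>\<Psi>. \<exists>(v, b)\<in>C. f v = b" if "\<Psi> \<subseteq> cf15_clauses A R" and "finite \<Psi>" for \<Psi>
      using cf15_clauses_finitely_satisfiable[OF assms that] .
  qed
  then show ?thesis
    using cf15_of_model[OF \<open>AF A R\<close>] by blast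
qed

end
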